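(* Let $I=[-1,1]$ be a parametrised interval object in a category $\mathcal{C}$ with finite products, with negation $-\colon I\to I$ (the unique midpoint endomorphism with $-(1)=-1$, $-(-1)=1$) and $0=-1\oplus 1$. Then there is a unique map $(x,y)\mapsto x\cdot y\colon I\times I\to I$ such that $x\cdot(-1)=-x$, $x\cdot 1=x$ and $x\cdot(y\oplus z)=(x\cdot y)\oplus(x\cdot z)$. Moreover, this map satisfies $x\cdot 0=0$, $x\cdot y=y\cdot x$ and $(x\cdot y)\cdot z=x\cdot(y\cdot z)$.
   Context: Equations are between generalised elements. A midpoint object is $(A,m)$ with $m\colon A\times A\to A$ satisfying $m(x,x)=x$, $m(x,y)=m(y,x)$, $m(m(x,y),m(z,w))=m(m(x,z),m(y,w))$; cancellative if $m(x,y)=m(x,z)$ implies $y=z$; iterative if for every $c\colon X\to A\times X$ there is a unique $u\colon X\to A$ with $m\circ(\mathrm{id}\times u)\circ c=u$. An m-convex body is a cancellative iterative midpoint object. A parametrised interval object is an m-convex body $(I,\oplus)$ with global points $a,b$ (here $-1,1$) such that for every object $P$, every m-convex body $(A,m)$ and maps $x_a,x_b\colon P\to A$ there is a unique map $h\colon P\times I\to A$ with $h(p,a)=x_a(p)$, $h(p,b)=x_b(p)$ and $h(p,x\oplus y)=m(h(p,x),h(p,y))$. *)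

theory Defs
  imports Main
begin

text \<open>Objects are the elements of type 'o; arrows are the elements of type 'm satisfying carr.
 ccomp g f is the composite g after f.\<close>

record ('o,'m) cat_fp =
  cdom  :: "'m \<Rightarrow> 'o"
  ccod  :: "'m \<Rightarrow> 'o"
  carr  :: "'m \<Rightarrow> bool"
  ccomp :: "'m \<Rightarrow> 'm \<Rightarrow> 'm"
  cid   :: "'o \<Rightarrow> 'm"
  cterm :: "'o"
  cbang :: "'o \<Rightarrow> 'm"
  cprod :: "'o \<Rightarrow> 'o \<Rightarrow> 'o"
  cfst  :: "'o \<Rightarrow> 'o \<Rightarrow> 'm"
  csnd  :: "'o \<Rightarrow> 'o \<Rightarrow> 'm"
  cpair :: "'m \<Rightarrow> 'm \<Rightarrow> 'm"

definition hom :: "('o,'m,'x) cat_fp_scheme \<Rightarrow> 'm \<Rightarrow> 'o \<Rightarrow> 'o \<Rightarrow> bool" where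
  "hom C f X Y \<longleftrightarrow> carr C f \<and> cdom C f = X \<and> ccod C f = Y"

definition cat_fp :: "('o,'m,'x) cat_fp_scheme \<Rightarrow> bool" where
  "cat_fp C \<longleftrightarrow>
     (\<forall>X. hom C (cid C X) X X) \<and>
     (\<forall>f g. carr C f \<and> carr C g \<and> ccod C f = cdom C g \<longrightarrow>
              hom C (ccomp C g f) (cdom C f) (ccod C g)) \<and>
     (\<forall>f. carr C f \<longrightarrow> ccomp C f (cid C (cdom C f)) = f \<and> ccomp C (cid C (ccod C f)) f = f) \<and>
     (\<forall>f g h. carr C f \<and> carr C g \<and> carr C h \<and> ccod C f = cdom C g \<and> ccod C g = cdom C h \<longrightarrow>
              ccomp C h (ccomp C g f) = ccomp C (ccomp C h g) f) \<and>
     (\<forall>X. hom C (cbang C X) X (cterm C)) \<and>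
     (\<forall>X f. hom C f X (cterm C) \<longrightarrow> f = cbang C X) \<and>
     (\<forall>X Y. hom C (cfst C X Y) (cprod C X Y) X \<and> hom C (csnd C X Y) (cprod C X Y) Y) \<and>
     (\<forall>Z X Y f g. hom C f Z X \<and> hom C g Z Y \<longrightarrow>
          hom C (cpair C f g) Z (cprod C X Y) \<and>
          ccomp C (cfst C X Y) (cpair C f g) = f \<and>
          ccomp C (csnd C X Y) (cpair C f g) = g \<and>
          (\<forall>h. hom C h Z (cprod C X Y) \<and> ccomp C (cfst C X Y) h = f \<and>
                ccomp C (csnd C X Y) h = g \<longrightarrow> h = cpair C f g))"

definition mid :: "('o,'m,'x) cat_fp_scheme \<Rightarrow> 'm \<Rightarrow> 'm \<Rightarrow> 'm \<Rightarrow> 'm" where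
  "mid C m x y = ccomp C m (cpair C x y)"

text \<open>A global point a : 1 -> A viewed as a generalised element at stage X.\<close>
definition cst :: "('o,'m,'x) cat_fp_scheme \<Rightarrow> 'm \<Rightarrow> 'o \<Rightarrow> 'm" where
  "cst C a X = ccomp C a (cbang C X)"

definition midpoint_obj :: "('o,'m,'x) cat_fp_scheme \<Rightarrow> 'o \<Rightarrow> 'm \<Rightarrow> bool" where
  "midpoint_obj C A m \<longleftrightarrow> hom C m (cprod C A A) A \<and>
     (\<forall>X x y z w. hom C x X A \<and> hom C y X A \<and> hom C z X A \<and> hom C w X A \<longrightarrow>
        mid C m x x = x \<and>
        mid C m x y = mid C m y x \<and>
        mid C m (mid C m x y) (mid C m z w) = mid C m (mid C m x z) (mid C m y w))"

definition cancellative :: "('o,'m,'x) cat_fp_scheme \<Rightarrow> 'o \<Rightarrow> 'm \<Rightarrow> bool" where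
  "cancellative C A m \<longleftrightarrow>
     (\<forall>X x y z. hom C x X A \<and> hom C y X A \<and> hom C z X A \<and> mid C m x y = mid C m x z \<longrightarrow> y = z)"

definition iterative :: "('o,'m,'x) cat_fp_scheme \<Rightarrow> 'o \<Rightarrow> 'm \<Rightarrow> bool" where
  "iterative C A m \<longleftrightarrow>
     (\<forall>X c. hom C c X (cprod C A X) \<longrightarrow>
        (\<exists>!u. hom C u X A \<and>
           ccomp C m (ccomp C (cpair C (cfst C A X) (ccomp C u (csnd C A X))) c) = u))"

definition mconvex_body :: "('o,'m,'x) cat_fp_scheme \<Rightarrow> 'o \<Rightarrow> 'm \<Rightarrow> bool" where
  "mconvex_body C A m \<longleftrightarrow> midpoint_obj C A m \<and> cancellative C A m \<and> iterative C A m"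

definition param_interval :: "('o,'m,'x) cat_fp_scheme \<Rightarrow> 'o \<Rightarrow> 'm \<Rightarrow> 'm \<Rightarrow> 'm \<Rightarrow> bool" where
  "param_interval C I op a b \<longleftrightarrow>
     mconvex_body C I op \<and> hom C a (cterm C) I \<and> hom C b (cterm C) I \<and>
     (\<forall>P A m xa xb. mconvex_body C A m \<and> hom C xa P A \<and> hom C xb P A \<longrightarrow>
        (\<exists>!h. hom C h (cprod C P I) A \<and>
           (\<forall>X p. hom C p X P \<longrightarrow>
               ccomp C h (cpair C p (cst C a X)) = ccomp C xa p \<and>
               ccomp C h (cpair C p (cst C b X)) = ccomp C xb p) \<and>
           (\<forall>X p x y. hom C p X P \<and> hom C x X I \<and> hom C y X I \<longrightarrow>
               ccomp C h (cpair C p (mid C op x y)) =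
               mid C m (ccomp C h (cpair C p x)) (ccomp C h (cpair C p y)))))"

definition is_negation :: "('o,'m,'x) cat_fp_scheme \<Rightarrow> 'o \<Rightarrow> 'm \<Rightarrow> 'm \<Rightarrow> 'm \<Rightarrow> 'm \<Rightarrow> bool" where
  "is_negation C I op a b neg \<longleftrightarrow> hom C neg I I \<and>
     (\<forall>X x y. hom C x X I \<and> hom C y X I \<longrightarrow>
        ccomp C neg (mid C op x y) = mid C op (ccomp C neg x) (ccomp C neg y)) \<and>
     ccomp C neg b = a \<and> ccomp C neg a = b"

end

theory Submission
  imports Defs
begin

text \<open>Multiplication is the map I \<times> I \<rightarrow> I given by the universal property of I with parameter
  object I, sending -1 to negation and 1 to the identity. Every further law is an instance of one
  induction principle, obtained from the uniqueness part of the universal property: two families of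
  maps P \<times> I \<rightarrow> A that agree at \<plusminus>1 and preserve midpoints in the I-argument coincide. In this way
  one gets successively -(-x) = x, -x \<oplus> x = 0, the left unit laws (-1)\<cdot>x = -x and 1\<cdot>x = x,
  x\<cdot>(-y) = -(x\<cdot>y) and left distributivity; commutativity and associativity then follow because
  both sides are midpoint-preserving in the last variable with equal values at \<plusminus>1, and
  x\<cdot>0 = x\<cdot>(-1) \<oplus> x\<cdot>1 = -x \<oplus> x = 0.\<close>

locale fp_category =
  fixes C :: "('o,'m) cat_fp"
  assumes cat_fp: "cat_fp C"
begin

lemma id_arr: "carr C (cid C X)" "cdom C (cid C X) = X" "ccod C (cid C X) = X"
  using cat_fp by (auto simp: cat_fp_def hom_def)

lemma comp_hom:
  "carr C f \<Longrightarrow> carr C g \<Longrightarrow> ccod C f = cdom C g \<Longrightarrow> hom C (ccomp C g f) (cdom C f) (ccod C g)"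
  using cat_fp unfolding cat_fp_def by blast

lemma comp_arr:
  assumes "carr C f" "carr C g" "ccod C f = cdom C g"
  shows "carr C (ccomp C g f)" "cdom C (ccomp C g f) = cdom C f" "ccod C (ccomp C g f) = ccod C g"
  using comp_hom[OF assms] unfolding hom_def by blast+

lemma comp_id_left: "carr C f \<Longrightarrow> ccod C f = Y \<Longrightarrow> ccomp C (cid C Y) f = f"
  and comp_id_right: "carr C f \<Longrightarrow> cdom C f = X \<Longrightarrow> ccomp C f (cid C X) = f"
  using cat_fp unfolding cat_fp_def by blast+

lemma comp_assoc:
  "carr C f \<Longrightarrow> carr C g \<Longrightarrow> carr C h \<Longrightarrow> ccod C f = cdom C g \<Longrightarrow> ccod C g = cdom C h \<Longrightarrow>
   ccomp C (ccomp C h g) f = ccomp C h (ccomp C g f)"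
  using cat_fp unfolding cat_fp_def by metis

lemma bang_arr: "carr C (cbang C X)" "cdom C (cbang C X) = X" "ccod C (cbang C X) = cterm C"
  using cat_fp by (auto simp: cat_fp_def hom_def)

lemma bang_unique: "hom C f X (cterm C) \<Longrightarrow> f = cbang C X"
  using cat_fp by (auto simp: cat_fp_def)

lemma fst_arr: "carr C (cfst C X Y)" "cdom C (cfst C X Y) = cprod C X Y" "ccod C (cfst C X Y) = X"
  and snd_arr: "carr C (csnd C X Y)" "cdom C (csnd C X Y) = cprod C X Y" "ccod C (csnd C X Y) = Y"
  using cat_fp by (auto simp: cat_fp_def hom_def)

lemma pair_universal:
  assumes "carr C f" "carr C g" "cdom C f = cdom C g"
  defines "X \<equiv> ccod C f" and "Y \<equiv> ccod C g"
  shows "hom C (cpair C f g) (cdom C f) (cprod C X Y) \<and>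
    ccomp C (cfst C X Y) (cpair C f g) = f \<and> ccomp C (csnd C X Y) (cpair C f g) = g \<and>
    (\<forall>h. hom C h (cdom C f) (cprod C X Y) \<and> ccomp C (cfst C X Y) h = f \<and>
         ccomp C (csnd C X Y) h = g \<longrightarrow> h = cpair C f g)"
proof -
  have "hom C f (cdom C f) X" "hom C g (cdom C f) Y"
    using assms by (auto simp: hom_def)
  then show ?thesis using cat_fp unfolding cat_fp_def by blast
qed

lemma pair_arr:
  assumes "carr C f" "carr C g" "cdom C f = cdom C g"
  shows "carr C (cpair C f g)" "cdom C (cpair C f g) = cdom C f"
    "ccod C (cpair C f g) = cprod C (ccod C f) (ccod C g)"
  using pair_universal[OF assms] unfolding hom_def by blast+

lemma fst_pair:
  "carr C f \<Longrightarrow> carr C g \<Longrightarrow> cdom C f = cdom C g \<Longrightarrow> ccod C f = X \<Longrightarrow> ccod C g = Y \<Longrightarrow>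
   ccomp C (cfst C X Y) (cpair C f g) = f"
  and snd_pair:
  "carr C f \<Longrightarrow> carr C g \<Longrightarrow> cdom C f = cdom C g \<Longrightarrow> ccod C f = X \<Longrightarrow> ccod C g = Y \<Longrightarrow>
   ccomp C (csnd C X Y) (cpair C f g) = g"
  using pair_universal by blast+

lemmas arr_simps = id_arr comp_arr bang_arr fst_arr snd_arr pair_arr

lemma bang_comp: "carr C k \<Longrightarrow> ccod C k = X \<Longrightarrow> ccomp C (cbang C X) k = cbang C (cdom C k)"
  by (rule bang_unique) (simp add: hom_def arr_simps)

lemma pair_comp:
  assumes f: "carr C f" and g: "carr C g" and k: "carr C k"
    and dom: "cdom C f = cdom C g" "ccod C k = cdom C f"
  shows "ccomp C (cpair C f g) k = cpair C (ccomp C f k) (ccomp C g k)"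
proof -
  let ?X = "ccod C f" and ?Y = "ccod C g"
  have "ccomp C (cfst C ?X ?Y) (ccomp C (cpair C f g) k) = ccomp C f k"
    "ccomp C (csnd C ?X ?Y) (ccomp C (cpair C f g) k) = ccomp C g k"
    using assms by (simp_all add: comp_assoc[symmetric] arr_simps fst_pair snd_pair)
  then show ?thesis
    using pair_universal[of "ccomp C f k" "ccomp C g k"] assms by (simp add: arr_simps hom_def)
qed

lemma cst_arr:
  assumes "carr C a" "cdom C a = cterm C"
  shows "carr C (cst C a X)" "cdom C (cst C a X) = X" "ccod C (cst C a X) = ccod C a"
  using assms by (simp_all add: cst_def arr_simps)

lemma cst_comp:
  "carr C a \<Longrightarrow> cdom C a = cterm C \<Longrightarrow> carr C k \<Longrightarrow> ccod C k = X \<Longrightarrow>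
   ccomp C (cst C a X) k = cst C a (cdom C k)"
  by (simp add: cst_def comp_assoc arr_simps bang_comp)

lemma comp_cst:
  "carr C a \<Longrightarrow> cdom C a = cterm C \<Longrightarrow> carr C f \<Longrightarrow> ccod C a = cdom C f \<Longrightarrow>
   ccomp C f (cst C a X) = cst C (ccomp C f a) X"
  by (simp add: cst_def comp_assoc arr_simps)

context
  fixes m x y
  assumes arrs: "carr C m" "carr C x" "carr C y" "cdom C x = cdom C y"
    and dom_m: "cdom C m = cprod C (ccod C x) (ccod C y)"
begin

lemma mid_arr: "carr C (mid C m x y)" "cdom C (mid C m x y) = cdom C x" "ccod C (mid C m x y) = ccod C m"
  using arrs dom_m unfolding mid_def by (simp_all add: arr_simps)

lemma mid_comp: "carr C k \<Longrightarrow> ccod C k = cdom C x \<Longrightarrow> ccomp C (mid C m x y) k = mid C m (ccomp C x k) (ccomp C y k)"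
  using arrs dom_m by (simp add: mid_def comp_assoc arr_simps pair_comp)

end

lemmas comp_simps = arr_simps cst_arr mid_arr comp_id_left comp_id_right comp_assoc fst_pair snd_pair
  bang_comp pair_comp cst_comp comp_cst mid_comp

end

text \<open>A family of generalised elements F p x of A, stable under change of stage. Such a family
  is determined by the single arrow F (cfst C P I) (csnd C P I) : P \<times> I \<rightarrow> A.\<close>

definition natural_family ::
    "('o,'m,'x) cat_fp_scheme \<Rightarrow> 'o \<Rightarrow> 'o \<Rightarrow> 'o \<Rightarrow> ('m \<Rightarrow> 'm \<Rightarrow> 'm) \<Rightarrow> bool" where
  "natural_family C P I A F \<longleftrightarrow>
     (\<forall>Y p x. hom C p Y P \<and> hom C x Y I \<longrightarrow> hom C (F p x) Y A) \<and>
     (\<forall>Y Z p x k. hom C p Y P \<and> hom C x Y I \<and> hom C k Z Y \<longrightarrow>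
        ccomp C (F p x) k = F (ccomp C p k) (ccomp C x k))"

lemma (in fp_category) natural_family_eval:
  assumes H: "natural_family C P I A H" and p: "hom C p X P" and x: "hom C x X I"
  shows "ccomp C (H (cfst C P I) (csnd C P I)) (cpair C p x) = H p x"
proof -
  have "hom C (cfst C P I) (cprod C P I) P" "hom C (csnd C P I) (cprod C P I) I"
    "hom C (cpair C p x) X (cprod C P I)"
    using p x by (simp_all add: hom_def comp_simps)
  then have "ccomp C (H (cfst C P I) (csnd C P I)) (cpair C p x) =
      H (ccomp C (cfst C P I) (cpair C p x)) (ccomp C (csnd C P I) (cpair C p x))"
    using H unfolding natural_family_def by blast
  also have "\<dots> = H p x"
    using p x by (simp add: hom_def comp_simps)
  finally show ?thesis .
qed

lemma (in fp_category) natural_family_cst: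
  assumes H: "natural_family C P I A H" and p: "hom C p X P" and c: "hom C c (cterm C) I"
  shows "H p (cst C c X) = ccomp C (H (cid C P) (cst C c P)) p"
proof -
  have "hom C (cid C P) P P" "hom C (cst C c P) P I"
    using c by (simp_all add: hom_def comp_simps)
  then have "ccomp C (H (cid C P) (cst C c P)) p = H (ccomp C (cid C P) p) (ccomp C (cst C c P) p)"
    using H p unfolding natural_family_def by blast
  also have "\<dots> = H p (cst C c X)"
    using p c by (simp add: hom_def comp_simps)
  finally show ?thesis by simp
qed

locale interval_with_negation = fp_category C for C :: "('o,'m) cat_fp" +
  fixes I :: 'o and op a b neg :: 'm
  assumes interval: "param_interval C I op a b"
    and negation: "is_negation C I op a b neg"
begin

lemma op_arr: "carr C op" "cdom C op = cprod C I I" "ccod C op = I"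
  using interval by (auto simp: param_interval_def mconvex_body_def midpoint_obj_def hom_def)

lemma endpoints_arr:
  "carr C a" "cdom C a = cterm C" "ccod C a = I"
  "carr C b" "cdom C b = cterm C" "ccod C b = I"
  using interval by (auto simp: param_interval_def hom_def)

lemma neg_arr: "carr C neg" "cdom C neg = I" "ccod C neg = I"
  and neg_endpoints: "ccomp C neg a = b" "ccomp C neg b = a"
  using negation by (auto simp: is_negation_def hom_def)

lemma neg_mid:
  "carr C x \<Longrightarrow> carr C y \<Longrightarrow> cdom C x = cdom C y \<Longrightarrow> ccod C x = I \<Longrightarrow> ccod C y = I \<Longrightarrow>
   ccomp C neg (mid C op x y) = mid C op (ccomp C neg x) (ccomp C neg y)"
  using negation unfolding is_negation_def hom_def by metis

lemma interval_mconvex: "mconvex_body C I op"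
  using interval by (simp add: param_interval_def)

lemma interval_universal:
  assumes "mconvex_body C A m" "hom C xa P A" "hom C xb P A"
  shows "\<exists>!h. hom C h (cprod C P I) A \<and>
    (\<forall>X p. hom C p X P \<longrightarrow>
       ccomp C h (cpair C p (cst C a X)) = ccomp C xa p \<and>
       ccomp C h (cpair C p (cst C b X)) = ccomp C xb p) \<and>
    (\<forall>X p x y. hom C p X P \<and> hom C x X I \<and> hom C y X I \<longrightarrow>
       ccomp C h (cpair C p (mid C op x y)) = mid C m (ccomp C h (cpair C p x)) (ccomp C h (cpair C p y)))"
  using interval assms unfolding param_interval_def by simp

lemma mid_idem: "carr C x \<Longrightarrow> ccod C x = I \<Longrightarrow> mid C op x x = x"
  using interval_mconvex unfolding mconvex_body_def midpoint_obj_def hom_def by metis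

lemma mid_commute:
  "carr C x \<Longrightarrow> carr C y \<Longrightarrow> cdom C y = cdom C x \<Longrightarrow> ccod C x = I \<Longrightarrow> ccod C y = I \<Longrightarrow>
   mid C op x y = mid C op y x"
  using interval_mconvex unfolding mconvex_body_def midpoint_obj_def hom_def by metis

lemma mid_medial:
  assumes "carr C x" "carr C y" "carr C z" "carr C w"
    and "cdom C y = cdom C x" "cdom C z = cdom C x" "cdom C w = cdom C x"
    and "ccod C x = I" "ccod C y = I" "ccod C z = I" "ccod C w = I"
  shows "mid C op (mid C op x y) (mid C op z w) = mid C op (mid C op x z) (mid C op y w)"
  using interval_mconvex assms unfolding mconvex_body_def midpoint_obj_def hom_def by metis

lemmas interval_simps = comp_simps op_arr endpoints_arr neg_arr neg_endpoints neg_mid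

lemma cst_mid: "cst C (mid C op a b) X = mid C op (cst C a X) (cst C b X)"
  unfolding cst_def by (simp add: interval_simps)

text \<open>Both families induce arrows P \<times> I \<rightarrow> A with the endpoint values of F, which uniqueness
  in the universal property identifies. The equations F p x = l and G p x = r make the rule
  applicable when l and r match the family instances only after simplification.\<close>

lemma interval_induct:
  assumes A: "mconvex_body C A m"
    and F: "natural_family C P I A F" and G: "natural_family C P I A G"
    and at_a: "\<And>Y p. hom C p Y P \<Longrightarrow> F p (cst C a Y) = G p (cst C a Y)"
    and at_b: "\<And>Y p. hom C p Y P \<Longrightarrow> F p (cst C b Y) = G p (cst C b Y)"
    and F_mid: "\<And>Y p x y. hom C p Y P \<Longrightarrow> hom C x Y I \<Longrightarrow> hom C y Y I \<Longrightarrow>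
      F p (mid C op x y) = mid C m (F p x) (F p y)"
    and G_mid: "\<And>Y p x y. hom C p Y P \<Longrightarrow> hom C x Y I \<Longrightarrow> hom C y Y I \<Longrightarrow>
      G p (mid C op x y) = mid C m (G p x) (G p y)"
    and p: "hom C p X P" and x: "hom C x X I"
    and Fx: "F p x = l" and Gx: "G p x = r"
  shows "l = r"
proof -
  define xa where "xa = F (cid C P) (cst C a P)"
  define xb where "xb = F (cid C P) (cst C b P)"
  have ab: "hom C a (cterm C) I" "hom C b (cterm C) I"
    by (simp_all add: hom_def endpoints_arr)
  have "hom C (cid C P) P P" "hom C (cst C a P) P I" "hom C (cst C b P) P I"
    by (simp_all add: hom_def interval_simps)
  then have xab: "hom C xa P A" "hom C xb P A"
    unfolding xa_def xb_def using F unfolding natural_family_def by blast+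
  define Q where "Q h \<longleftrightarrow> hom C h (cprod C P I) A \<and>
    (\<forall>X p. hom C p X P \<longrightarrow>
       ccomp C h (cpair C p (cst C a X)) = ccomp C xa p \<and>
       ccomp C h (cpair C p (cst C b X)) = ccomp C xb p) \<and>
    (\<forall>X p x y. hom C p X P \<and> hom C x X I \<and> hom C y X I \<longrightarrow>
       ccomp C h (cpair C p (mid C op x y)) = mid C m (ccomp C h (cpair C p x)) (ccomp C h (cpair C p y)))"
    for h
  have unique: "\<exists>!h. Q h"
    unfolding Q_def using interval_universal[OF A xab] .
  have Q_family: "Q (H (cfst C P I) (csnd C P I))"
    if H: "natural_family C P I A H"
      and H_a: "\<And>Y p. hom C p Y P \<Longrightarrow> H p (cst C a Y) = F p (cst C a Y)"
      and H_b: "\<And>Y p. hom C p Y P \<Longrightarrow> H p (cst C b Y) = F p (cst C b Y)"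
      and H_mid: "\<And>Y p x y. hom C p Y P \<Longrightarrow> hom C x Y I \<Longrightarrow> hom C y Y I \<Longrightarrow>
        H p (mid C op x y) = mid C m (H p x) (H p y)"
    for H
    unfolding Q_def
  proof (intro conjI allI impI)
    show "hom C (H (cfst C P I) (csnd C P I)) (cprod C P I) A"
      using H unfolding natural_family_def by (simp add: hom_def comp_simps)
  next
    fix X p assume p: "hom C p X P"
    have "hom C (cst C a X) X I" "hom C (cst C b X) X I"
      by (simp_all add: hom_def interval_simps)
    then show "ccomp C (H (cfst C P I) (csnd C P I)) (cpair C p (cst C a X)) = ccomp C xa p"
      and "ccomp C (H (cfst C P I) (csnd C P I)) (cpair C p (cst C b X)) = ccomp C xb p"
      using natural_family_eval[OF H p] natural_family_cst[OF F p] ab H_a H_b p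
      unfolding xa_def xb_def by simp_all
  next
    fix X p x y assume "hom C p X P \<and> hom C x X I \<and> hom C y X I"
    moreover from this have "hom C (mid C op x y) X I"
      by (simp add: hom_def interval_simps)
    ultimately show "ccomp C (H (cfst C P I) (csnd C P I)) (cpair C p (mid C op x y)) =
      mid C m (ccomp C (H (cfst C P I) (csnd C P I)) (cpair C p x))
        (ccomp C (H (cfst C P I) (csnd C P I)) (cpair C p y))"
      using natural_family_eval[OF H] H_mid by metis
  qed
  have "Q (F (cfst C P I) (csnd C P I))" "Q (G (cfst C P I) (csnd C P I))"
    by (rule Q_family; simp add: F G at_a at_b F_mid G_mid)+
  with unique have "F (cfst C P I) (csnd C P I) = G (cfst C P I) (csnd C P I)"
    by blast
  then show "l = r"
    using natural_family_eval[OF F p x] natural_family_eval[OF G p x] Fx Gx by simp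
qed

lemma neg_neg: "carr C x \<Longrightarrow> ccod C x = I \<Longrightarrow> ccomp C neg (ccomp C neg x) = x"
  by (rule interval_induct[OF interval_mconvex, where P="cdom C x" and p="cid C (cdom C x)"
        and F="\<lambda>p x. ccomp C neg (ccomp C neg x)" and G="\<lambda>p x. x"])
    (auto simp: natural_family_def hom_def interval_simps)

lemma mid_neg_self: "hom C x X I \<Longrightarrow> mid C op (ccomp C neg x) x = cst C (mid C op a b) X"
  unfolding cst_mid
  by (rule interval_induct[OF interval_mconvex, where P=X and p="cid C X"
        and F="\<lambda>p x. mid C op (ccomp C neg x) x"
        and G="\<lambda>p x. mid C op (cst C a (cdom C x)) (cst C b (cdom C x))"])
    (auto simp: natural_family_def hom_def interval_simps mid_idem
      intro: mid_commute mid_medial)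

end

text \<open>Here x \<cdot> y is ccomp C mul (cpair C x y), and a, b play the roles of -1, 1.\<close>

definition multiplication ::
    "('o,'m,'x) cat_fp_scheme \<Rightarrow> 'o \<Rightarrow> 'm \<Rightarrow> 'm \<Rightarrow> 'm \<Rightarrow> 'm \<Rightarrow> 'm \<Rightarrow> bool" where
  "multiplication C I op a b neg mul \<longleftrightarrow> hom C mul (cprod C I I) I \<and>
     (\<forall>X x y z. hom C x X I \<and> hom C y X I \<and> hom C z X I \<longrightarrow>
        ccomp C mul (cpair C x (cst C a X)) = ccomp C neg x \<and>
        ccomp C mul (cpair C x (cst C b X)) = x \<and>
        ccomp C mul (cpair C x (mid C op y z)) =
          mid C op (ccomp C mul (cpair C x y)) (ccomp C mul (cpair C x z)))"

lemma (in interval_with_negation) multiplication_ex1: "\<exists>!mul. multiplication C I op a b neg mul"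
proof -
  have id_p: "ccomp C (cid C I) p = p" if "hom C p X I" for p X
    using that by (simp add: hom_def comp_id_left)
  have "hom C neg I I" "hom C (cid C I) I I"
    by (simp_all add: hom_def interval_simps)
  note universal = interval_universal[OF interval_mconvex this]
  have equiv: "(hom C h (cprod C I I) I \<and>
      (\<forall>X p. hom C p X I \<longrightarrow>
         ccomp C h (cpair C p (cst C a X)) = ccomp C neg p \<and>
         ccomp C h (cpair C p (cst C b X)) = ccomp C (cid C I) p) \<and>
      (\<forall>X p x y. hom C p X I \<and> hom C x X I \<and> hom C y X I \<longrightarrow>
         ccomp C h (cpair C p (mid C op x y)) =
           mid C op (ccomp C h (cpair C p x)) (ccomp C h (cpair C p y))))
      \<longleftrightarrow> multiplication C I op a b neg h" for h
    unfolding multiplication_def using id_p by (intro iffI; metis)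
  show ?thesis
    using universal by (simp only: equiv)
qed

locale interval_multiplication = interval_with_negation C I op a b neg
  for C :: "('o,'m) cat_fp" and I op a b neg +
  fixes mul :: 'm
  assumes multiplication: "multiplication C I op a b neg mul"
begin

lemma mul_arr: "carr C mul" "cdom C mul = cprod C I I" "ccod C mul = I"
  using multiplication by (auto simp: multiplication_def hom_def)

lemma mul_a_right:
  "carr C x \<Longrightarrow> ccod C x = I \<Longrightarrow> cdom C x = X \<Longrightarrow> ccomp C mul (cpair C x (cst C a X)) = ccomp C neg x"
  and mul_b_right:
  "carr C x \<Longrightarrow> ccod C x = I \<Longrightarrow> cdom C x = X \<Longrightarrow> ccomp C mul (cpair C x (cst C b X)) = x"
  using multiplication unfolding multiplication_def hom_def by blast+

lemma mul_mid_right: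
  "carr C x \<Longrightarrow> carr C y \<Longrightarrow> carr C z \<Longrightarrow> cdom C y = cdom C x \<Longrightarrow> cdom C z = cdom C x \<Longrightarrow>
   ccod C x = I \<Longrightarrow> ccod C y = I \<Longrightarrow> ccod C z = I \<Longrightarrow>
   ccomp C mul (cpair C x (mid C op y z)) = mid C op (ccomp C mul (cpair C x y)) (ccomp C mul (cpair C x z))"
  using multiplication unfolding multiplication_def hom_def by metis

lemmas mul_simps = interval_simps mul_arr mul_a_right mul_b_right mul_mid_right neg_neg mid_idem

lemma mul_a_left:
  "carr C x \<Longrightarrow> ccod C x = I \<Longrightarrow> cdom C x = X \<Longrightarrow> ccomp C mul (cpair C (cst C a X) x) = ccomp C neg x"
  by (rule interval_induct[OF interval_mconvex, where P=X and p="cid C X"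
        and F="\<lambda>p x. ccomp C mul (cpair C (cst C a (cdom C x)) x)" and G="\<lambda>p x. ccomp C neg x"])
    (auto simp: natural_family_def hom_def mul_simps)

lemma mul_b_left:
  "carr C x \<Longrightarrow> ccod C x = I \<Longrightarrow> cdom C x = X \<Longrightarrow> ccomp C mul (cpair C (cst C b X) x) = x"
  by (rule interval_induct[OF interval_mconvex, where P=X and p="cid C X"
        and F="\<lambda>p x. ccomp C mul (cpair C (cst C b (cdom C x)) x)" and G="\<lambda>p x. x"])
    (auto simp: natural_family_def hom_def mul_simps)

lemma mul_neg_right:
  "carr C x \<Longrightarrow> carr C y \<Longrightarrow> cdom C y = cdom C x \<Longrightarrow> ccod C x = I \<Longrightarrow> ccod C y = I \<Longrightarrow>
   ccomp C mul (cpair C x (ccomp C neg y)) = ccomp C neg (ccomp C mul (cpair C x y))"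
  by (rule interval_induct[OF interval_mconvex, where P="cdom C x" and p="cid C (cdom C x)"
        and F="\<lambda>p y. ccomp C mul (cpair C (ccomp C x p) (ccomp C neg y))"
        and G="\<lambda>p y. ccomp C neg (ccomp C mul (cpair C (ccomp C x p) y))"])
    (auto simp: natural_family_def hom_def mul_simps)

lemma mul_mid_left:
  "carr C x \<Longrightarrow> carr C y \<Longrightarrow> carr C z \<Longrightarrow> cdom C y = cdom C x \<Longrightarrow> cdom C z = cdom C x \<Longrightarrow>
   ccod C x = I \<Longrightarrow> ccod C y = I \<Longrightarrow> ccod C z = I \<Longrightarrow>
   ccomp C mul (cpair C (mid C op y z) x) = mid C op (ccomp C mul (cpair C y x)) (ccomp C mul (cpair C z x))"
  by (rule interval_induct[OF interval_mconvex, where P="cdom C x" and p="cid C (cdom C x)"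
        and F="\<lambda>p x. ccomp C mul (cpair C (mid C op (ccomp C y p) (ccomp C z p)) x)"
        and G="\<lambda>p x. mid C op (ccomp C mul (cpair C (ccomp C y p) x)) (ccomp C mul (cpair C (ccomp C z p) x))"])
    (auto simp: natural_family_def hom_def mul_simps intro: mid_medial)

lemma mul_commute:
  "hom C x X I \<Longrightarrow> hom C y X I \<Longrightarrow> ccomp C mul (cpair C x y) = ccomp C mul (cpair C y x)"
  by (rule interval_induct[OF interval_mconvex, where P=X and p="cid C X" and x=y
        and F="\<lambda>p y. ccomp C mul (cpair C (ccomp C x p) y)"
        and G="\<lambda>p y. ccomp C mul (cpair C y (ccomp C x p))"])
    (auto simp: natural_family_def hom_def mul_simps mul_a_left mul_b_left mul_mid_left)

lemma mul_assoc:
  "hom C x X I \<Longrightarrow> hom C y X I \<Longrightarrow> hom C z X I \<Longrightarrow>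
   ccomp C mul (cpair C (ccomp C mul (cpair C x y)) z) = ccomp C mul (cpair C x (ccomp C mul (cpair C y z)))"
  by (rule interval_induct[OF interval_mconvex, where P=X and p="cid C X" and x=z
        and F="\<lambda>p z. ccomp C mul (cpair C (ccomp C mul (cpair C (ccomp C x p) (ccomp C y p))) z)"
        and G="\<lambda>p z. ccomp C mul (cpair C (ccomp C x p) (ccomp C mul (cpair C (ccomp C y p) z)))"])
    (auto simp: natural_family_def hom_def mul_simps mul_neg_right)

lemma mul_zero_right: "hom C x X I \<Longrightarrow> ccomp C mul (cpair C x (cst C (mid C op a b) X)) = cst C (mid C op a b) X"
  using mid_neg_self[of x X] by (simp add: cst_mid hom_def mul_simps)

end

theorem mainTheorem4:
  fixes C :: "('o,'m) cat_fp" and I :: 'o and op a b neg :: 'm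
  assumes "cat_fp C"
    and "param_interval C I op a b"
    and "is_negation C I op a b neg"
  shows "(\<exists>!mul. hom C mul (cprod C I I) I \<and>
            (\<forall>X x y z. hom C x X I \<and> hom C y X I \<and> hom C z X I \<longrightarrow>
               ccomp C mul (cpair C x (cst C a X)) = ccomp C neg x \<and>
               ccomp C mul (cpair C x (cst C b X)) = x \<and>
               ccomp C mul (cpair C x (mid C op y z)) =
                 mid C op (ccomp C mul (cpair C x y)) (ccomp C mul (cpair C x z)))) \<and>
         (\<forall>mul. hom C mul (cprod C I I) I \<and>
            (\<forall>X x y z. hom C x X I \<and> hom C y X I \<and> hom C z X I \<longrightarrow>
               ccomp C mul (cpair C x (cst C a X)) = ccomp C neg x \<and>
               ccomp C mul (cpair C x (cst C b X)) = x \<and>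
               ccomp C mul (cpair C x (mid C op y z)) =
                 mid C op (ccomp C mul (cpair C x y)) (ccomp C mul (cpair C x z)))
          \<longrightarrow>
            (\<forall>X x y z. hom C x X I \<and> hom C y X I \<and> hom C z X I \<longrightarrow>
               ccomp C mul (cpair C x (cst C (mid C op a b) X)) = cst C (mid C op a b) X \<and>
               ccomp C mul (cpair C x y) = ccomp C mul (cpair C y x) \<and>
               ccomp C mul (cpair C (ccomp C mul (cpair C x y)) z) =
                 ccomp C mul (cpair C x (ccomp C mul (cpair C y z)))))"
proof -
  interpret interval_with_negation C I op a b neg
    using assms by unfold_locales
  have "\<exists>!mul. multiplication C I op a b neg mul"
    by (rule multiplication_ex1)
  moreover have "ccomp C mul (cpair C x (cst C (mid C op a b) X)) = cst C (mid C op a b) X \<and>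
      ccomp C mul (cpair C x y) = ccomp C mul (cpair C y x) \<and>
      ccomp C mul (cpair C (ccomp C mul (cpair C x y)) z) =
        ccomp C mul (cpair C x (ccomp C mul (cpair C y z)))"
    if "multiplication C I op a b neg mul" "hom C x X I" "hom C y X I" "hom C z X I"
    for mul X x y z
  proof -
    interpret interval_multiplication C I op a b neg mul
      using that(1) by unfold_locales
    show ?thesis
      using that(2-4) mul_zero_right mul_commute mul_assoc by blast
  qed
  ultimately show ?thesis
    unfolding multiplication_def[symmetric] by blast
qed

end
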